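(* Let $(\mu,b)$ be a stable configuration under perfect observability for the objective game $G$. Then for every $\theta\in\operatorname{supp}\mu$, the strategy profile $b(\theta)\in\prod_{i\in N}\Delta(A_i)$ is Pareto efficient with respect to $\pi$.
   Context: Objective game: $G=(N,A,\pi)$ is a finite $n$-player normal-form game, $N=\{1,\dots,n\}$, finite action sets $A_i$, $A=\prod_{i\in N}A_i$, material payoff (fitness) functions $\pi_i:A\to\mathbb{R}$, extended multilinearly to mixed profiles in $\prod_{i}\Delta(A_i)$ (and linearly to correlated strategies in $\Delta(A)$); $\pi=(\pi_1,\dots,\pi_n)$. Preference types: $\Theta=\mathbb{R}^A$ (utility functions on $A$, extended multilinearly to mixed profiles). $\mathcal{M}(\Theta^n)$ is the set of product distributions $\mu=\mu_1\times\dots\times\mu_n$ on $\Theta^n$ with each $\mu_i$ finitely supported; $\operatorname{supp}\mu=\prod_i\operatorname{supp}\mu_i$, $\mu_{-i}(\theta_{-i})=\prod_{j\neq i}\mu_j(\theta_j)$. Mutants: for nonempty $J\subseteq N$, a mutant sub-profile is $\tilde\theta_J\in\prod_{j\in J}(\Theta\setminus\operatorname{supp}\mu_j)$ with shares $\varepsilon=(\varepsilon_j)_{j\in J}\in(0,1)^{|J|}$, $\|\varepsilon\|=\max_j\varepsilon_j$; the post-entry distribution $\tilde\mu^\varepsilon$ has $\tilde\mu^\varepsilon_i=(1-\varepsilon_i)\mu_i+\varepsilon_i\delta_{\tilde\theta_i}$ for $i\in J$ and $\tilde\mu^\varepsilon_i=\mu_i$ otherwise. Perfect observability: for $\mu\in\mathcal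 M(\Theta^n)$, an equilibrium is a map $b:\operatorname{supp}\mu\to\prod_i\Delta(A_i)$ such that for each $\theta$, $b(\theta)$ is a Nash equilibrium of the normal-form game with action sets $A_i$ and payoffs $\theta_1,\dots,\theta_n$; $B_1(\mu)$ is the set of these; $(\mu,b)$ with $b\in B_1(\mu)$ is a configuration. Average fitness of $\theta_i\in\operatorname{supp}\mu_i$: $\Pi_{\theta_i}(\mu;b)=\sum_{\theta'_{-i}\in\operatorname{supp}\mu_{-i}}\mu_{-i}(\theta'_{-i})\pi_i(b(\theta_i,\theta'_{-i}))$. $(\mu,b)$ is balanced if for each $i$ all types in $\operatorname{supp}\mu_i$ have equal average fitness. Focal set: $B_1(\tilde\mu^\varepsilon;b)=\{\tilde b\in B_1(\tilde\mu^\varepsilon):\tilde b(\theta)=b(\theta)\ \forall\theta\in\operatorname{supp}\mu\}$. $(\mu,b)$ is stable if it is balanced and for every nonempty $J\subseteq N$ and every mutant sub-profile $\tilde\theta_J$ there is $\bar\epsilon\in(0,1)$ such that for every $\varepsilon\in(0,1)^{|J|}$ with $\|\varepsilon\|<\bar\epsilon$ and every $\tilde b\in B_1(\tilde\mu^\varepsilon;b)$, either (i) there is $j\in J$ with $\Pi_{\theta_j}(\tilde\mu^\varepsilon;\tilde b)>\Pi_{\tilde\theta_j}(\tilde\mu^\varepsilon;\tilde b)$ for all $\theta_j\in\operatorname{supp}\mu_j$, or (ii) for every $i\in N$ all types in $\operatorname{supp}\tilde\mu^\varepsilon_i$ have equal average fitness under $(\tilde\mu^\varepsilon,\tilde b)$.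 Pareto notions: $\sigma$ Pareto dominates $\sigma'$ if $\pi_i(\sigma)\ge\pi_i(\sigma')$ for all $i$ with strict inequality for some $i$; $\sigma$ is Pareto efficient if no profile in $\prod_i\Delta(A_i)$ Pareto dominates it. *)

theory Defs
  imports Complex_Main "HOL-Library.FuncSet"
begin

(* Players: a finite type 'i (N = UNIV).  Preference types / utility functions:
   functions ('i => 'a) => real, required to vanish off the profile set,
   so that they correspond exactly to elements of R^A. *)

definition profiles :: "('i \<Rightarrow> 'a set) \<Rightarrow> ('i \<Rightarrow> 'a) set" where
  "profiles A = PiE UNIV A"

definition is_mixed :: "'a set \<Rightarrow> ('a \<Rightarrow> real) \<Rightarrow> bool" where
  "is_mixed Ai s \<longleftrightarrow> (\<forall>a. 0 \<le> s a) \<and> (\<forall>a. a \<notin> Ai \<longrightarrow> s a = 0) \<and> sum s Ai = 1"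

definition mixed_profile :: "('i \<Rightarrow> 'a set) \<Rightarrow> ('i \<Rightarrow> 'a \<Rightarrow> real) \<Rightarrow> bool" where
  "mixed_profile A \<sigma> \<longleftrightarrow> (\<forall>i. is_mixed (A i) (\<sigma> i))"

definition mexp :: "('i::finite \<Rightarrow> 'a set) \<Rightarrow> (('i \<Rightarrow> 'a) \<Rightarrow> real) \<Rightarrow> ('i \<Rightarrow> 'a \<Rightarrow> real) \<Rightarrow> real" where
  "mexp A u \<sigma> = (\<Sum>a\<in>profiles A. (\<Prod>i\<in>UNIV. \<sigma> i (a i)) * u a)"

definition nash :: "('i::finite \<Rightarrow> 'a set) \<Rightarrow> ('i \<Rightarrow> ('i \<Rightarrow> 'a) \<Rightarrow> real) \<Rightarrow> ('i \<Rightarrow> 'a \<Rightarrow> real) \<Rightarrow> bool" where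
  "nash A \<theta> \<sigma> \<longleftrightarrow> mixed_profile A \<sigma> \<and>
     (\<forall>i s. is_mixed (A i) s \<longrightarrow> mexp A (\<theta> i) (\<sigma>(i := s)) \<le> mexp A (\<theta> i) \<sigma>)"

definition types :: "('i \<Rightarrow> 'a set) \<Rightarrow> (('i \<Rightarrow> 'a) \<Rightarrow> real) set" where
  "types A = {\<theta>. \<forall>a. a \<notin> profiles A \<longrightarrow> \<theta> a = 0}"

definition supp :: "('t \<Rightarrow> real) \<Rightarrow> 't set" where
  "supp m = {x. 0 < m x}"

definition is_dist :: "('i \<Rightarrow> 'a set) \<Rightarrow> ((('i \<Rightarrow> 'a) \<Rightarrow> real) \<Rightarrow> real) \<Rightarrow> bool" where
  "is_dist A m \<longleftrightarrow> (\<forall>\<theta>. 0 \<le> m \<theta>) \<and> finite (supp m) \<and> supp m \<subseteq> types A \<and> sum m (supp m) = 1"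

(* product distribution mu = mu_1 x ... x mu_n in M(Theta^n), given by its marginals *)
definition pop_dist :: "('i \<Rightarrow> 'a set) \<Rightarrow> ('i \<Rightarrow> (('i \<Rightarrow> 'a) \<Rightarrow> real) \<Rightarrow> real) \<Rightarrow> bool" where
  "pop_dist A \<mu> \<longleftrightarrow> (\<forall>i. is_dist A (\<mu> i))"

definition supp_prof :: "('i \<Rightarrow> 't \<Rightarrow> real) \<Rightarrow> ('i \<Rightarrow> 't) set" where
  "supp_prof \<mu> = PiE UNIV (\<lambda>i. supp (\<mu> i))"

definition eqm :: "('i::finite \<Rightarrow> 'a set) \<Rightarrow> ('i \<Rightarrow> (('i \<Rightarrow> 'a) \<Rightarrow> real) \<Rightarrow> real)
    \<Rightarrow> (('i \<Rightarrow> ('i \<Rightarrow> 'a) \<Rightarrow> real) \<Rightarrow> 'i \<Rightarrow> 'a \<Rightarrow> real) \<Rightarrow> bool" where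
  "eqm A \<mu> b \<longleftrightarrow> (\<forall>\<theta>\<in>supp_prof \<mu>. nash A \<theta> (b \<theta>))"

definition avg_fit :: "('i::finite \<Rightarrow> 'a set) \<Rightarrow> ('i \<Rightarrow> ('i \<Rightarrow> 'a) \<Rightarrow> real)
    \<Rightarrow> ('i \<Rightarrow> (('i \<Rightarrow> 'a) \<Rightarrow> real) \<Rightarrow> real)
    \<Rightarrow> (('i \<Rightarrow> ('i \<Rightarrow> 'a) \<Rightarrow> real) \<Rightarrow> 'i \<Rightarrow> 'a \<Rightarrow> real)
    \<Rightarrow> 'i \<Rightarrow> (('i \<Rightarrow> 'a) \<Rightarrow> real) \<Rightarrow> real" where
  "avg_fit A \<pi> \<mu> b i t =
     (\<Sum>\<theta>'\<in>PiE UNIV (\<lambda>j. if j = i then {t} else supp (\<mu> j)).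
        (\<Prod>j\<in>UNIV - {i}. \<mu> j (\<theta>' j)) * mexp A (\<pi> i) (b \<theta>'))"

definition balanced :: "('i::finite \<Rightarrow> 'a set) \<Rightarrow> ('i \<Rightarrow> ('i \<Rightarrow> 'a) \<Rightarrow> real)
    \<Rightarrow> ('i \<Rightarrow> (('i \<Rightarrow> 'a) \<Rightarrow> real) \<Rightarrow> real)
    \<Rightarrow> (('i \<Rightarrow> ('i \<Rightarrow> 'a) \<Rightarrow> real) \<Rightarrow> 'i \<Rightarrow> 'a \<Rightarrow> real) \<Rightarrow> bool" where
  "balanced A \<pi> \<mu> b \<longleftrightarrow>
     (\<forall>i. \<forall>t\<in>supp (\<mu> i). \<forall>t'\<in>supp (\<mu> i). avg_fit A \<pi> \<mu> b i t = avg_fit A \<pi> \<mu> b i t')"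

definition post_entry :: "('i \<Rightarrow> 't \<Rightarrow> real) \<Rightarrow> 'i set \<Rightarrow> ('i \<Rightarrow> 't) \<Rightarrow> ('i \<Rightarrow> real)
    \<Rightarrow> ('i \<Rightarrow> 't \<Rightarrow> real)" where
  "post_entry \<mu> J mt \<epsilon> =
     (\<lambda>i. if i \<in> J then (\<lambda>\<theta>. (1 - \<epsilon> i) * \<mu> i \<theta> + \<epsilon> i * (if \<theta> = mt i then 1 else 0))
          else \<mu> i)"

definition focal :: "('i::finite \<Rightarrow> 'a set) \<Rightarrow> ('i \<Rightarrow> (('i \<Rightarrow> 'a) \<Rightarrow> real) \<Rightarrow> real)
    \<Rightarrow> (('i \<Rightarrow> ('i \<Rightarrow> 'a) \<Rightarrow> real) \<Rightarrow> 'i \<Rightarrow> 'a \<Rightarrow> real)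
    \<Rightarrow> ('i \<Rightarrow> (('i \<Rightarrow> 'a) \<Rightarrow> real) \<Rightarrow> real)
    \<Rightarrow> (('i \<Rightarrow> ('i \<Rightarrow> 'a) \<Rightarrow> real) \<Rightarrow> 'i \<Rightarrow> 'a \<Rightarrow> real) \<Rightarrow> bool" where
  "focal A \<mu> b \<mu>' b' \<longleftrightarrow> eqm A \<mu>' b' \<and> (\<forall>\<theta>\<in>supp_prof \<mu>. b' \<theta> = b \<theta>)"

definition stable :: "('i::finite \<Rightarrow> 'a set) \<Rightarrow> ('i \<Rightarrow> ('i \<Rightarrow> 'a) \<Rightarrow> real)
    \<Rightarrow> ('i \<Rightarrow> (('i \<Rightarrow> 'a) \<Rightarrow> real) \<Rightarrow> real)
    \<Rightarrow> (('i \<Rightarrow> ('i \<Rightarrow> 'a) \<Rightarrow> real) \<Rightarrow> 'i \<Rightarrow> 'a \<Rightarrow> real) \<Rightarrow> bool" where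
  "stable A \<pi> \<mu> b \<longleftrightarrow> balanced A \<pi> \<mu> b \<and>
    (\<forall>J. J \<noteq> {} \<longrightarrow>
      (\<forall>mt. (\<forall>j\<in>J. mt j \<in> types A - supp (\<mu> j)) \<longrightarrow>
        (\<exists>eb. 0 < eb \<and> eb < 1 \<and>
          (\<forall>\<epsilon>. (\<forall>j\<in>J. 0 < \<epsilon> j \<and> \<epsilon> j < 1) \<longrightarrow> Max (\<epsilon> ` J) < eb \<longrightarrow>
            (\<forall>b'. focal A \<mu> b (post_entry \<mu> J mt \<epsilon>) b' \<longrightarrow>
               (\<exists>j\<in>J. \<forall>t\<in>supp (\<mu> j).
                  avg_fit A \<pi> (post_entry \<mu> J mt \<epsilon>) b' j t
                    > avg_fit A \<pi> (post_entry \<mu> J mt \<epsilon>) b' j (mt j))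
               \<or> balanced A \<pi> (post_entry \<mu> J mt \<epsilon>) b')))))"

definition pareto_dominates :: "('i::finite \<Rightarrow> 'a set) \<Rightarrow> ('i \<Rightarrow> ('i \<Rightarrow> 'a) \<Rightarrow> real)
    \<Rightarrow> ('i \<Rightarrow> 'a \<Rightarrow> real) \<Rightarrow> ('i \<Rightarrow> 'a \<Rightarrow> real) \<Rightarrow> bool" where
  "pareto_dominates A \<pi> \<sigma> \<sigma>' \<longleftrightarrow>
     (\<forall>i. mexp A (\<pi> i) \<sigma>' \<le> mexp A (\<pi> i) \<sigma>) \<and> (\<exists>i. mexp A (\<pi> i) \<sigma>' < mexp A (\<pi> i) \<sigma>)"

definition pareto_efficient :: "('i::finite \<Rightarrow> 'a set) \<Rightarrow> ('i \<Rightarrow> ('i \<Rightarrow> 'a) \<Rightarrow> real)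
    \<Rightarrow> ('i \<Rightarrow> 'a \<Rightarrow> real) \<Rightarrow> bool" where
  "pareto_efficient A \<pi> \<sigma> \<longleftrightarrow>
     mixed_profile A \<sigma> \<and> \<not> (\<exists>\<sigma>'. mixed_profile A \<sigma>' \<and> pareto_dominates A \<pi> \<sigma>' \<sigma>)"

end

theory Submission
  imports Defs
begin

text \<open>Suppose \<open>b \<theta>\<close> were Pareto dominated by \<open>\<sigma>'\<close>. Let a mutant enter every population at once,
  all mutants having the same constant utility, so that every profile is a Nash equilibrium for
  them. Mutants meeting only mutants play \<open>\<sigma>'\<close>; in every other encounter each mutant is treated
  as the resident type \<open>\<theta> j\<close>. Against this focal equilibrium a mutant of population \<open>i\<close> fares
  exactly as the resident \<open>\<theta> i\<close>, except in the all-mutant encounter, where it earns the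
  \<open>\<sigma>'\<close>-payoff instead of the \<open>b \<theta>\<close>-payoff. Hence no mutant is driven out, while some mutant
  strictly outperforms \<open>\<theta> i\<close>, so the post-entry configuration is not balanced either.\<close>

definition const_type :: "('i \<Rightarrow> 'a set) \<Rightarrow> real \<Rightarrow> ('i \<Rightarrow> 'a) \<Rightarrow> real" where
  "const_type A c = (\<lambda>a. if a \<in> profiles A then c else 0)"

lemma const_type_in_types: "const_type A c \<in> types A"
  by (simp add: types_def const_type_def)

lemma inj_const_type:
  assumes "profiles A \<noteq> {}"
  shows "inj (const_type A)"
proof
  fix c d assume cd: "const_type A c = const_type A d"
  obtain a where "a \<in> profiles A" using assms by blast
  then show "c = d" using fun_cong[OF cd, of a] by (simp add: const_type_def)
qed

lemma ex_const_type_notin: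
  assumes "finite S" "profiles A \<noteq> {}"
  shows "\<exists>c. const_type A c \<notin> S"
proof -
  have "finite (const_type A -` S)"
    using assms by (intro finite_vimageI inj_const_type)
  then show ?thesis using ex_new_if_finite[OF infinite_UNIV_char_0] by blast
qed

lemma profiles_nonempty: "(\<And>i. A i \<noteq> {}) \<Longrightarrow> profiles A \<noteq> {}"
  by (simp add: profiles_def PiE_eq_empty_iff)

lemma mixed_profile_prod_sum:
  fixes A :: "'i::finite \<Rightarrow> 'a set"
  assumes "\<And>i. finite (A i)" "mixed_profile A \<sigma>"
  shows "(\<Sum>a\<in>profiles A. \<Prod>i\<in>UNIV. \<sigma> i (a i)) = 1"
proof -
  have "(\<Sum>a\<in>profiles A. \<Prod>i\<in>UNIV. \<sigma> i (a i)) = (\<Prod>i\<in>UNIV. \<Sum>x\<in>A i. \<sigma> i x)"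
    unfolding profiles_def by (rule prod_sum_PiE[symmetric]) (auto simp: assms)
  also have "\<dots> = 1"
    using assms(2) by (simp add: mixed_profile_def is_mixed_def)
  finally show ?thesis .
qed

lemma mexp_const_type:
  fixes A :: "'i::finite \<Rightarrow> 'a set"
  assumes "\<And>i. finite (A i)" "mixed_profile A \<sigma>"
  shows "mexp A (const_type A c) \<sigma> = c"
proof -
  have "mexp A (const_type A c) \<sigma> = (\<Sum>a\<in>profiles A. (\<Prod>i\<in>UNIV. \<sigma> i (a i)) * c)"
    unfolding mexp_def const_type_def by (rule sum.cong) auto
  also have "\<dots> = c"
    by (simp add: sum_distrib_right[symmetric] mixed_profile_prod_sum[OF assms])
  finally show ?thesis .
qed

lemma mixed_profile_upd:
  "mixed_profile A \<sigma> \<Longrightarrow> is_mixed (A i) s \<Longrightarrow> mixed_profile A (\<sigma>(i := s))"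
  by (simp add: mixed_profile_def)

text \<open>Players with constant utility are indifferent, so they may be swapped in freely.\<close>

lemma nash_replace_by_const_types:
  fixes A :: "'i::finite \<Rightarrow> 'a set"
  assumes fin: "\<And>i. finite (A i)"
    and mixed: "mixed_profile A \<sigma>"
    and agree: "\<And>i. \<theta>' i \<notin> range (const_type A) \<Longrightarrow> \<theta>' i = \<theta> i \<and> nash A \<theta> \<sigma>"
  shows "nash A \<theta>' \<sigma>"
  unfolding nash_def
proof (intro conjI allI impI mixed)
  fix i s assume s: "is_mixed (A i) s"
  show "mexp A (\<theta>' i) (\<sigma>(i := s)) \<le> mexp A (\<theta>' i) \<sigma>"
  proof (cases "\<theta>' i \<in> range (const_type A)")
    case True
    then show ?thesis
      using mixed s by (auto simp: mexp_const_type[OF fin] mixed_profile_upd)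
  next
    case False
    then show ?thesis using agree s unfolding nash_def by metis
  qed
qed

lemma mem_supp_prof_iff: "\<theta> \<in> supp_prof \<mu> \<longleftrightarrow> (\<forall>j. \<theta> j \<in> supp (\<mu> j))"
  by (simp add: supp_prof_def PiE_UNIV_domain Pi_iff)

lemma supp_post_entry:
  assumes "\<And>t. 0 \<le> \<mu> j t" "j \<in> J" "0 < \<epsilon> j" "\<epsilon> j < 1"
  shows "supp (post_entry \<mu> J mt \<epsilon> j) = insert (mt j) (supp (\<mu> j))"
  using assms by (auto simp: supp_def post_entry_def zero_less_mult_iff add_pos_nonneg add_nonneg_pos)

text \<open>Average fitness of type \<open>t\<close> and of type \<open>s\<close> of player \<open>i\<close> face the same distribution of
  opponents, so their difference is a sum over encounters of \<open>s\<close>.\<close>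

lemma avg_fit_diff:
  fixes A :: "'i::finite \<Rightarrow> 'a set"
  shows "avg_fit A \<pi> \<mu> b i t - avg_fit A \<pi> \<mu> b i s =
    (\<Sum>\<theta>'\<in>PiE UNIV (\<lambda>j. if j = i then {s} else supp (\<mu> j)).
       (\<Prod>j\<in>UNIV - {i}. \<mu> j (\<theta>' j)) * (mexp A (\<pi> i) (b (\<theta>'(i := t))) - mexp A (\<pi> i) (b \<theta>')))"
proof -
  define S where "S u = PiE UNIV (\<lambda>j. if j = i then {u} else supp (\<mu> j))" for u
  define w where "w \<theta>' = (\<Prod>j\<in>UNIV - {i}. \<mu> j (\<theta>' j))" for \<theta>'
  have image: "S t = (\<lambda>\<theta>'. \<theta>'(i := t)) ` S s"
  proof (intro set_eqI iffI)
    fix f assume f: "f \<in> S t"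
    then have "f(i := s) \<in> S s" "f = (f(i := s))(i := t)"
      by (auto simp: S_def PiE_UNIV_domain Pi_iff split: if_splits)
    then show "f \<in> (\<lambda>\<theta>'. \<theta>'(i := t)) ` S s" by blast
  qed (auto simp: S_def PiE_UNIV_domain Pi_iff split: if_splits)
  have "inj_on (\<lambda>\<theta>'. \<theta>'(i := t)) (S s)"
  proof (rule inj_onI)
    fix x y assume x: "x \<in> S s" and y: "y \<in> S s" and xy: "x(i := t) = y(i := t)"
    show "x = y"
    proof
      fix j show "x j = y j"
        using x y fun_cong[OF xy, of j]
        by (cases "j = i") (auto simp: S_def PiE_UNIV_domain Pi_iff split: if_splits)
    qed
  qed
  moreover have "w (\<theta>'(i := t)) = w \<theta>'" for \<theta>'
    unfolding w_def by (rule prod.cong) auto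
  ultimately have "avg_fit A \<pi> \<mu> b i t = (\<Sum>\<theta>'\<in>S s. w \<theta>' * mexp A (\<pi> i) (b (\<theta>'(i := t))))"
    unfolding avg_fit_def S_def[symmetric] w_def[symmetric] image
    by (simp add: sum.reindex)
  moreover have "avg_fit A \<pi> \<mu> b i s = (\<Sum>\<theta>'\<in>S s. w \<theta>' * mexp A (\<pi> i) (b \<theta>'))"
    unfolding avg_fit_def S_def w_def ..
  ultimately show ?thesis
    by (simp add: S_def w_def sum_subtractf[symmetric] right_diff_distrib)
qed

definition mutant_extension ::
    "(('i \<Rightarrow> 't) \<Rightarrow> 's) \<Rightarrow> ('i \<Rightarrow> 't) \<Rightarrow> ('i \<Rightarrow> 't) \<Rightarrow> 's \<Rightarrow> ('i \<Rightarrow> 't) \<Rightarrow> 's" where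
  "mutant_extension b \<theta> mt \<sigma> \<theta>' =
     (if \<forall>j. \<theta>' j = mt j then \<sigma> else b (\<lambda>j. if \<theta>' j = mt j then \<theta> j else \<theta>' j))"

lemma mutant_extension_resident:
  "(\<And>j. \<theta>' j \<noteq> mt j) \<Longrightarrow> mutant_extension b \<theta> mt \<sigma> \<theta>' = b \<theta>'"
  by (simp add: mutant_extension_def)

lemma mutant_extension_upd:
  assumes "\<theta>' i = \<theta> i" "\<theta> i \<noteq> mt i"
  shows "mutant_extension b \<theta> mt \<sigma> (\<theta>'(i := mt i)) =
    (if \<forall>j. j \<noteq> i \<longrightarrow> \<theta>' j = mt j then \<sigma> else mutant_extension b \<theta> mt \<sigma> \<theta>')"
proof -
  have "(\<lambda>j. if (\<theta>'(i := mt i)) j = mt j then \<theta> j else (\<theta>'(i := mt i)) j) =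
        (\<lambda>j. if \<theta>' j = mt j then \<theta> j else \<theta>' j)"
    using assms by auto
  then show ?thesis using assms by (auto simp: mutant_extension_def)
qed

lemma mutant_extension_others_mutant:
  assumes "\<theta>' i = \<theta> i" "\<theta> i \<noteq> mt i" "\<forall>j. j \<noteq> i \<longrightarrow> \<theta>' j = mt j"
  shows "mutant_extension b \<theta> mt \<sigma> \<theta>' = b \<theta>"
proof -
  have "(\<lambda>j. if \<theta>' j = mt j then \<theta> j else \<theta>' j) = \<theta>"
  proof
    fix j show "(if \<theta>' j = mt j then \<theta> j else \<theta>' j) = \<theta> j"
      using assms by (cases "j = i") auto
  qed
  then show ?thesis using assms by (auto simp: mutant_extension_def)
qed

lemma focal_mutant_extension:
  fixes A :: "'i::finite \<Rightarrow> 'a set"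
  assumes fin: "\<And>i. finite (A i)"
    and eq: "eqm A \<mu> b"
    and \<theta>: "\<theta> \<in> supp_prof \<mu>"
    and mixed: "mixed_profile A \<sigma>"
    and mt: "\<And>j. mt j \<in> range (const_type A) - supp (\<mu> j)"
    and supp': "\<And>j. supp (\<mu>' j) = insert (mt j) (supp (\<mu> j))"
  shows "focal A \<mu> b \<mu>' (mutant_extension b \<theta> mt \<sigma>)"
  unfolding focal_def eqm_def
proof (intro conjI ballI)
  fix \<theta>' assume "\<theta>' \<in> supp_prof \<mu>'"
  then have \<theta>': "\<theta>' j = mt j \<or> \<theta>' j \<in> supp (\<mu> j)" for j
    by (auto simp: mem_supp_prof_iff supp')
  show "nash A \<theta>' (mutant_extension b \<theta> mt \<sigma> \<theta>')"
  proof (cases "\<forall>j. \<theta>' j = mt j")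
    case True
    then have const: "\<theta>' i \<in> range (const_type A)" for i using mt by simp
    have "nash A \<theta>' \<sigma>"
      by (rule nash_replace_by_const_types[OF fin mixed]) (simp add: const)
    then show ?thesis using True by (simp add: mutant_extension_def)
  next
    case False
    define \<theta>r where "\<theta>r = (\<lambda>j. if \<theta>' j = mt j then \<theta> j else \<theta>' j)"
    have "\<theta>r \<in> supp_prof \<mu>"
      using \<theta> \<theta>' by (auto simp: mem_supp_prof_iff \<theta>r_def)
    then have nash_r: "nash A \<theta>r (b \<theta>r)" using eq by (simp add: eqm_def)
    have agree: "\<theta>' i = \<theta>r i" if "\<theta>' i \<notin> range (const_type A)" for i
      using that mt by (auto simp: \<theta>r_def)
    have "nash A \<theta>' (b \<theta>r)"
    proof (rule nash_replace_by_const_types[where \<theta> = \<theta>r, OF fin])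
      show "mixed_profile A (b \<theta>r)" using nash_r by (simp add: nash_def)
    qed (use agree nash_r in blast)
    moreover have "mutant_extension b \<theta> mt \<sigma> \<theta>' = b \<theta>r"
      using False by (auto simp: mutant_extension_def \<theta>r_def)
    ultimately show ?thesis by simp
  qed
next
  fix \<theta>' assume "\<theta>' \<in> supp_prof \<mu>"
  then have "\<theta>' j \<noteq> mt j" for j using mt[of j] by (metis DiffD2 mem_supp_prof_iff)
  then show "mutant_extension b \<theta> mt \<sigma> \<theta>' = b \<theta>'" by (rule mutant_extension_resident)
qed

lemma avg_fit_mutant_extension_diff:
  fixes A :: "'i::finite \<Rightarrow> 'a set"
  assumes "\<theta> i \<noteq> mt i"
  shows "avg_fit A \<pi> \<mu> (mutant_extension b \<theta> mt \<sigma>) i (mt i)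
           - avg_fit A \<pi> \<mu> (mutant_extension b \<theta> mt \<sigma>) i (\<theta> i) =
    (\<Sum>\<theta>'\<in>PiE UNIV (\<lambda>j. if j = i then {\<theta> i} else supp (\<mu> j)).
       (\<Prod>j\<in>UNIV - {i}. \<mu> j (\<theta>' j)) *
       (if \<forall>j. j \<noteq> i \<longrightarrow> \<theta>' j = mt j then mexp A (\<pi> i) \<sigma> - mexp A (\<pi> i) (b \<theta>) else 0))"
  unfolding avg_fit_diff
proof (rule sum.cong[OF refl])
  fix \<theta>' assume "\<theta>' \<in> PiE UNIV (\<lambda>j. if j = i then {\<theta> i} else supp (\<mu> j))"
  then have "\<theta>' i = \<theta> i" by (auto simp: PiE_UNIV_domain Pi_iff split: if_splits)
  then show "(\<Prod>j\<in>UNIV - {i}. \<mu> j (\<theta>' j)) *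
      (mexp A (\<pi> i) (mutant_extension b \<theta> mt \<sigma> (\<theta>'(i := mt i)))
        - mexp A (\<pi> i) (mutant_extension b \<theta> mt \<sigma> \<theta>')) =
    (\<Prod>j\<in>UNIV - {i}. \<mu> j (\<theta>' j)) *
      (if \<forall>j. j \<noteq> i \<longrightarrow> \<theta>' j = mt j then mexp A (\<pi> i) \<sigma> - mexp A (\<pi> i) (b \<theta>) else 0)"
    using assms by (cases "\<forall>j. j \<noteq> i \<longrightarrow> \<theta>' j = mt j")
      (auto simp: mutant_extension_upd mutant_extension_others_mutant)
qed

definition mutants_outperform ::
    "('i::finite \<Rightarrow> 'a set) \<Rightarrow> ('i \<Rightarrow> ('i \<Rightarrow> 'a) \<Rightarrow> real)
      \<Rightarrow> ('i \<Rightarrow> (('i \<Rightarrow> 'a) \<Rightarrow> real) \<Rightarrow> real)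
      \<Rightarrow> (('i \<Rightarrow> ('i \<Rightarrow> 'a) \<Rightarrow> real) \<Rightarrow> 'i \<Rightarrow> 'a \<Rightarrow> real)
      \<Rightarrow> ('i \<Rightarrow> ('i \<Rightarrow> 'a) \<Rightarrow> real) \<Rightarrow> ('i \<Rightarrow> ('i \<Rightarrow> 'a) \<Rightarrow> real) \<Rightarrow> bool" where
  "mutants_outperform A \<pi> \<mu> b \<theta> mt \<longleftrightarrow>
     (\<forall>j. avg_fit A \<pi> \<mu> b j (\<theta> j) \<le> avg_fit A \<pi> \<mu> b j (mt j)) \<and>
     (\<exists>i. avg_fit A \<pi> \<mu> b i (\<theta> i) < avg_fit A \<pi> \<mu> b i (mt i))"

text \<open>The only fitness difference between \<open>mt i\<close> and \<open>\<theta> i\<close> arises in the all-mutant encounter,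
  which has positive probability.\<close>

lemma mutant_extension_outperforms:
  fixes A :: "'i::finite \<Rightarrow> 'a set"
  assumes \<theta>: "\<theta> \<in> supp_prof \<mu>"
    and dom: "pareto_dominates A \<pi> \<sigma> (b \<theta>)"
    and mt: "\<And>j. mt j \<notin> supp (\<mu> j)"
    and fin: "\<And>j. finite (supp (\<mu> j))"
    and nonneg: "\<And>j t. 0 \<le> \<mu>' j t"
    and supp': "\<And>j. supp (\<mu>' j) = insert (mt j) (supp (\<mu> j))"
  shows "mutants_outperform A \<pi> \<mu>' (mutant_extension b \<theta> mt \<sigma>) \<theta> mt"
  unfolding mutants_outperform_def
proof (intro conjI allI)
  let ?fit = "avg_fit A \<pi> \<mu>' (mutant_extension b \<theta> mt \<sigma>)"
  let ?S = "\<lambda>i. PiE UNIV (\<lambda>j. if j = i then {\<theta> i} else supp (\<mu>' j))"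
  let ?w = "\<lambda>i \<theta>'. \<Prod>j\<in>UNIV - {i}. \<mu>' j (\<theta>' j)"
  define d where "d i = mexp A (\<pi> i) \<sigma> - mexp A (\<pi> i) (b \<theta>)" for i
  have \<theta>_ne_mt: "\<theta> i \<noteq> mt i" for i
    using \<theta> mt by (metis mem_supp_prof_iff)
  have diff: "?fit i (mt i) - ?fit i (\<theta> i) =
      (\<Sum>\<theta>'\<in>?S i. ?w i \<theta>' * (if \<forall>j. j \<noteq> i \<longrightarrow> \<theta>' j = mt j then d i else 0))" for i
    unfolding d_def by (rule avg_fit_mutant_extension_diff[OF \<theta>_ne_mt])
  have d_nonneg: "0 \<le> d i" for i
    using dom by (simp add: pareto_dominates_def d_def)
  fix j
  show "?fit j (\<theta> j) \<le> ?fit j (mt j)"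
  proof -
    have "0 \<le> ?fit j (mt j) - ?fit j (\<theta> j)"
      unfolding diff using nonneg d_nonneg
      by (intro sum_nonneg mult_nonneg_nonneg prod_nonneg) auto
    then show ?thesis by simp
  qed
  obtain i where d_pos: "0 < d i"
    using dom by (auto simp: pareto_dominates_def d_def)
  define all_mutant where "all_mutant = mt(i := \<theta> i)"
  have "all_mutant \<in> ?S i"
    by (auto simp: all_mutant_def PiE_UNIV_domain supp')
  moreover have "0 < ?w i all_mutant"
    using nonneg supp' by (intro prod_pos) (auto simp: all_mutant_def supp_def)
  moreover have "finite (?S i)"
    using fin supp' by (intro finite_PiE) auto
  ultimately have "0 < ?fit i (mt i) - ?fit i (\<theta> i)"
    unfolding diff using nonneg d_nonneg d_pos
    by (intro sum_pos2[where i = all_mutant]) (auto simp: all_mutant_def intro!: prod_nonneg)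
  then show "\<exists>i. ?fit i (\<theta> i) < ?fit i (mt i)" by auto
qed

lemma pareto_dominance_invades:
  fixes A :: "'i::finite \<Rightarrow> 'a set"
  assumes fin: "\<And>i. finite (A i)"
    and eq: "eqm A \<mu> b"
    and \<theta>: "\<theta> \<in> supp_prof \<mu>"
    and mixed: "mixed_profile A \<sigma>"
    and dom: "pareto_dominates A \<pi> \<sigma> (b \<theta>)"
    and mt: "\<And>j. mt j \<in> range (const_type A) - supp (\<mu> j)"
    and nonneg: "\<And>j t. 0 \<le> \<mu> j t"
    and fin_supp: "\<And>j. finite (supp (\<mu> j))"
    and e: "0 < e" "e < 1"
  shows "\<exists>b'. focal A \<mu> b (post_entry \<mu> UNIV mt (\<lambda>_. e)) b' \<and>
    mutants_outperform A \<pi> (post_entry \<mu> UNIV mt (\<lambda>_. e)) b' \<theta> mt"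
proof (intro exI conjI)
  have supp': "supp (post_entry \<mu> UNIV mt (\<lambda>_. e) j) = insert (mt j) (supp (\<mu> j))" for j
    using nonneg e by (simp add: supp_post_entry)
  have nonneg': "0 \<le> post_entry \<mu> UNIV mt (\<lambda>_. e) j t" for j t
    using nonneg e by (simp add: post_entry_def)
  have mt_notin: "mt j \<notin> supp (\<mu> j)" for j
    using mt by blast
  show "focal A \<mu> b (post_entry \<mu> UNIV mt (\<lambda>_. e)) (mutant_extension b \<theta> mt \<sigma>)"
    using fin eq \<theta> mixed mt supp' by (rule focal_mutant_extension)
  show "mutants_outperform A \<pi> (post_entry \<mu> UNIV mt (\<lambda>_. e)) (mutant_extension b \<theta> mt \<sigma>) \<theta> mt"
    using \<theta> dom mt_notin fin_supp nonneg' supp' by (rule mutant_extension_outperforms)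
qed

lemma stable_excludes_invasion:
  fixes A :: "'i::finite \<Rightarrow> 'a set"
  assumes st: "stable A \<pi> \<mu> b"
    and mt: "\<And>j. mt j \<in> types A - supp (\<mu> j)"
    and \<theta>: "\<theta> \<in> supp_prof \<mu>"
    and nonneg: "\<And>j t. 0 \<le> \<mu> j t"
    and invade: "\<And>e. 0 < e \<Longrightarrow> e < 1 \<Longrightarrow> \<exists>b'. focal A \<mu> b (post_entry \<mu> UNIV mt (\<lambda>_. e)) b' \<and>
      mutants_outperform A \<pi> (post_entry \<mu> UNIV mt (\<lambda>_. e)) b' \<theta> mt"
  shows False
proof -
  have "\<exists>eb. 0 < eb \<and> eb < 1 \<and> (\<forall>\<epsilon>. (\<forall>j\<in>UNIV. 0 < \<epsilon> j \<and> \<epsilon> j < 1) \<longrightarrow>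
      Max (\<epsilon> ` UNIV) < eb \<longrightarrow> (\<forall>b'. focal A \<mu> b (post_entry \<mu> UNIV mt \<epsilon>) b' \<longrightarrow>
        (\<exists>j\<in>UNIV. \<forall>t\<in>supp (\<mu> j). avg_fit A \<pi> (post_entry \<mu> UNIV mt \<epsilon>) b' j t
                                    > avg_fit A \<pi> (post_entry \<mu> UNIV mt \<epsilon>) b' j (mt j))
        \<or> balanced A \<pi> (post_entry \<mu> UNIV mt \<epsilon>) b'))"
    (is "\<exists>eb. 0 < eb \<and> eb < 1 \<and> ?entry eb")
    by (rule conjunct2[OF st[unfolded stable_def], rule_format, of UNIV mt]) (use mt in auto)
  then obtain eb where eb: "0 < eb" "eb < 1" and entry: "?entry eb"
    by (elim exE conjE)
  define e where "e = eb / 2"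
  have e: "0 < e" "e < 1" "Max ((\<lambda>_::'i. e) ` UNIV) < eb"
    using eb by (simp_all add: e_def image_constant_conv)
  define \<mu>' where "\<mu>' = post_entry \<mu> UNIV mt (\<lambda>_. e)"
  obtain b' where focal: "focal A \<mu> b \<mu>' b'" and outperform: "mutants_outperform A \<pi> \<mu>' b' \<theta> mt"
    using invade[OF e(1,2)] unfolding \<mu>'_def by (elim exE conjE)
  have supp': "supp (\<mu>' i) = insert (mt i) (supp (\<mu> i))" for i
    unfolding \<mu>'_def using nonneg e by (intro supp_post_entry) auto
  have \<theta>_supp: "\<theta> j \<in> supp (\<mu> j)" for j
    using \<theta> by (simp add: mem_supp_prof_iff)
  have "(\<exists>j\<in>UNIV. \<forall>t\<in>supp (\<mu> j). avg_fit A \<pi> \<mu>' b' j t > avg_fit A \<pi> \<mu>' b' j (mt j))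
        \<or> balanced A \<pi> \<mu>' b'"
    unfolding \<mu>'_def by (rule entry[rule_format, OF _ e(3) focal[unfolded \<mu>'_def]]) (use e in auto)
  then show False
  proof
    assume "\<exists>j\<in>UNIV. \<forall>t\<in>supp (\<mu> j). avg_fit A \<pi> \<mu>' b' j t > avg_fit A \<pi> \<mu>' b' j (mt j)"
    then obtain j where "avg_fit A \<pi> \<mu>' b' j (\<theta> j) > avg_fit A \<pi> \<mu>' b' j (mt j)"
      using \<theta>_supp by blast
    moreover have "avg_fit A \<pi> \<mu>' b' j (\<theta> j) \<le> avg_fit A \<pi> \<mu>' b' j (mt j)"
      using outperform by (simp add: mutants_outperform_def)
    ultimately show False by simp
  next
    assume "balanced A \<pi> \<mu>' b'"
    moreover obtain i where "avg_fit A \<pi> \<mu>' b' i (\<theta> i) < avg_fit A \<pi> \<mu>' b' i (mt i)"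
      using outperform by (auto simp: mutants_outperform_def)
    ultimately show False
      using \<theta>_supp[of i] supp'[of i] unfolding balanced_def by (metis insertI1 insertI2 less_irrefl)
  qed
qed

theorem mainTheorem1:
  fixes A :: "'i::finite \<Rightarrow> 'a set"
    and \<pi> :: "'i \<Rightarrow> ('i \<Rightarrow> 'a) \<Rightarrow> real"
    and \<mu> :: "'i \<Rightarrow> (('i \<Rightarrow> 'a) \<Rightarrow> real) \<Rightarrow> real"
    and b :: "('i \<Rightarrow> ('i \<Rightarrow> 'a) \<Rightarrow> real) \<Rightarrow> 'i \<Rightarrow> 'a \<Rightarrow> real"
  assumes fin: "\<And>i. finite (A i)"
    and ne: "\<And>i. A i \<noteq> {}"
    and dist: "pop_dist A \<mu>"
    and eq: "eqm A \<mu> b"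
    and st: "stable A \<pi> \<mu> b"
  shows "\<forall>\<theta>\<in>supp_prof \<mu>. pareto_efficient A \<pi> (b \<theta>)"
proof (intro ballI)
  fix \<theta> assume \<theta>: "\<theta> \<in> supp_prof \<mu>"
  have nonneg: "\<And>j t. 0 \<le> \<mu> j t" and fin_supp: "\<And>j. finite (supp (\<mu> j))"
    using dist by (simp_all add: pop_dist_def is_dist_def)
  have "finite (\<Union>j. supp (\<mu> j))" using fin_supp by simp
  then obtain c where c: "const_type A c \<notin> (\<Union>j. supp (\<mu> j))"
    using ex_const_type_notin profiles_nonempty[of A, OF ne] by blast
  define mt where "mt = (\<lambda>_::'i. const_type A c)"
  have mt: "\<And>j. mt j \<in> range (const_type A) - supp (\<mu> j)"
    using c by (auto simp: mt_def)
  have "mixed_profile A (b \<theta>)" using eq \<theta> by (simp add: eqm_def nash_def)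
  moreover have False if "mixed_profile A \<sigma>" "pareto_dominates A \<pi> \<sigma> (b \<theta>)" for \<sigma>
  proof (rule stable_excludes_invasion[OF st _ \<theta> nonneg])
    show "mt j \<in> types A - supp (\<mu> j)" for j
      using mt[of j] const_type_in_types by auto
  qed (rule pareto_dominance_invades[OF fin eq \<theta> that mt nonneg fin_supp])
  ultimately show "pareto_efficient A \<pi> (b \<theta>)"
    unfolding pareto_efficient_def by blast
qed

end
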